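(* Let $f:\mathbb{R}^d\to\mathbb{R}$ be measurable and bounded below with $\int_{\mathbb{R}^d}|f(x')|\varphi_{x,\tau}(x')\,dx'<\infty$ for all $x\in\mathbb{R}^d$, and let $\tau>0$, $x_0\in\mathbb{R}^d$. Suppose a sequence $x_0,x_1,\dots,x_K$ satisfies, for each $k=0,\dots,K-1$, that $x_{k+1}$ is a minimizer of the map $$x\mapsto D_{\mathrm{KL}}(\varphi_{x,\tau}\,\|\,q_{x_k,\tau}).$$ Then $F^H_\tau(x_k)\le F^H_\tau(x_{k-1})$ for all $1\le k\le K$.
   Context: $\varphi_{x,\tau}$ denotes the Gaussian density on $\mathbb{R}^d$ with mean $x$ and covariance $\tau I$. The heat regularization of $f$ is $F^H_\tau(x) := \int_{\mathbb{R}^d} f(x')\,\varphi_{x,\tau}(x')\,dx'$. For $x\in\mathbb{R}^d$, $\tau>0$, $q_{x,\tau}(x') := Z_{x,\tau}^{-1}\exp\left(-f(x') - \frac{1}{2\tau}|x-x'|^2\right)$, with $Z_{x,\tau}$ the normalizing constant. The Kullback–Leibler divergence is $D_{\mathrm{KL}}(p\|q) := \int_{\mathbb{R}^d}\log\left(\frac{p(x)}{q(x)}\right)p(x)\,dx$. *)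

theory Defs
  imports "HOL-Analysis.Analysis"
begin

definition gauss_dens :: "real \<Rightarrow> 'a::euclidean_space \<Rightarrow> 'a \<Rightarrow> real" where
  "gauss_dens \<tau> x x' =
     (2 * pi * \<tau>) powr (- real DIM('a) / 2) * exp (- (norm (x' - x))\<^sup>2 / (2 * \<tau>))"

text \<open>Heat regularization F^H_tau(x) = integral of f against the Gaussian at x.\<close>
definition heat_reg :: "('a::euclidean_space \<Rightarrow> real) \<Rightarrow> real \<Rightarrow> 'a \<Rightarrow> real" where
  "heat_reg f \<tau> x = (\<integral>x'. f x' * gauss_dens \<tau> x x' \<partial>lebesgue)"

definition Zc :: "('a::euclidean_space \<Rightarrow> real) \<Rightarrow> real \<Rightarrow> 'a \<Rightarrow> real" where
  "Zc f \<tau> x = (\<integral>x'. exp (- f x' - (norm (x - x'))\<^sup>2 / (2 * \<tau>)) \<partial>lebesgue)"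

definition q_dens :: "('a::euclidean_space \<Rightarrow> real) \<Rightarrow> real \<Rightarrow> 'a \<Rightarrow> 'a \<Rightarrow> real" where
  "q_dens f \<tau> x x' = exp (- f x' - (norm (x - x'))\<^sup>2 / (2 * \<tau>)) / Zc f \<tau> x"

definition KL_div :: "('a::euclidean_space \<Rightarrow> real) \<Rightarrow> ('a \<Rightarrow> real) \<Rightarrow> real" where
  "KL_div p q = (\<integral>x. ln (p x / q x) * p x \<partial>lebesgue)"

end

theory Submission
  imports Defs "HOL-Probability.Distributions"
begin

text \<open>Expanding the logarithm,
  ln (gauss_x / q_y)(x') = c_tau + ln Z_y + |y - x|^2 / (2 tau) + f x' + (y - x) . (x - x') / tau.
  Integrated against the Gaussian centred at x, the linear last term vanishes by the symmetry of the
  Gaussian about x, so KL(gauss_x || q_y) = (c_tau + ln Z_y + |y - x|^2 / (2 tau)) * mass + F_tau(x).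
  The minimizer x_k does at least as well as the competitor x_(k-1), and comparing the two expansions
  leaves F_tau(x_k) + |x_k - x_(k-1)|^2 / (2 tau) * mass <= F_tau(x_(k-1)).\<close>

lemma integrable_exp_minus_power2_div:
  fixes s :: real
  assumes "s > 0"
  shows "integrable lborel (\<lambda>t::real. exp (- (t\<^sup>2) / s))"
proof -
  have "sqrt (pi * s) * normal_density 0 (sqrt (s / 2)) t = exp (- (t\<^sup>2) / s)" for t
  proof -
    have sq: "(sqrt (s / 2))\<^sup>2 = s / 2" using assms by simp
    have "sqrt (pi * s) > 0" "sqrt (s / 2) > 0" using assms by simp_all
    then show ?thesis unfolding normal_density_def sq by simp
  qed
  moreover have "integrable lborel (\<lambda>t. sqrt (pi * s) * normal_density 0 (sqrt (s / 2)) t)"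
    using assms by (intro integrable_mult_right integrable_normal_density) simp
  ultimately show ?thesis by simp
qed

lemma norm_sum_Basis_power2:
  "(norm (\<Sum>b\<in>Basis. f b *\<^sub>R b :: 'a::euclidean_space))\<^sup>2 = (\<Sum>b\<in>Basis. (f b)\<^sup>2)"
proof -
  define v where "v = (\<Sum>b\<in>Basis. f b *\<^sub>R b :: 'a)"
  have "(norm v)\<^sup>2 = (\<Sum>b\<in>Basis. (v \<bullet> b) * (v \<bullet> b))"
    unfolding power2_norm_eq_inner by (rule euclidean_inner)
  also have "\<dots> = (\<Sum>b\<in>Basis. (f b)\<^sup>2)"
    by (rule sum.cong) (simp_all add: v_def inner_sum_left_Basis power2_eq_square)
  finally show ?thesis by (simp only: v_def)
qed

lemma exp_scaled_power2_bound:
  fixes t \<tau> :: real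
  assumes "\<tau> > 0"
  shows "t * exp (- (t\<^sup>2) / (2 * \<tau>)) \<le> exp \<tau> * exp (- (t\<^sup>2) / (4 * \<tau>))"
proof -
  define a where "a = t\<^sup>2 / (4 * \<tau>)"
  have "4 * \<tau> * t \<le> t\<^sup>2 + 4 * \<tau>\<^sup>2"
    using sum_squares_ge_zero[of "t - 2 * \<tau>" 0] by (simp add: power2_eq_square algebra_simps)
  then have "(t - \<tau>) * (4 * \<tau>) \<le> t\<^sup>2"
    by (simp add: power2_eq_square algebra_simps)
  then have "t - \<tau> \<le> a"
    unfolding a_def using assms by (simp add: pos_le_divide_eq)
  then have "t \<le> exp (\<tau> + a)"
    using exp_ge_add_one_self[of "\<tau> + a"] by linarith
  then have "t * exp (- a) \<le> exp (\<tau> + a) * exp (- a)"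
    by (rule mult_right_mono) simp
  then have "t * exp (- a) * exp (- a) \<le> exp \<tau> * exp (- a)"
    by (intro mult_right_mono) (simp_all add: exp_add[symmetric])
  moreover have "- (t\<^sup>2) / (2 * \<tau>) = - a + - a" "- (t\<^sup>2) / (4 * \<tau>) = - a"
    unfolding a_def by simp_all
  ultimately show ?thesis
    by (simp only: exp_add mult.assoc)
qed

lemma integrable_exp_minus_norm_power2_div:
  fixes s :: real
  assumes "s > 0"
  shows "integrable lborel (\<lambda>z::'a::euclidean_space. exp (- ((norm z)\<^sup>2) / s))"
proof -
  interpret product_sigma_finite "\<lambda>_::'a. lborel::real measure" by standard
  have "(\<integral>\<^sup>+z. ennreal (exp (- ((norm z)\<^sup>2) / s)) \<partial>(lborel::'a measure)) =
      (\<integral>\<^sup>+g. ennreal (exp (- ((norm (\<Sum>b\<in>Basis. g b *\<^sub>R b :: 'a))\<^sup>2) / s)) \<partial>(\<Pi>\<^sub>M b\<in>Basis. lborel))"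
    by (subst lborel_eq) (simp add: nn_integral_distr)
  also have "\<dots> = (\<integral>\<^sup>+g. (\<Prod>b\<in>(Basis::'a set). ennreal (exp (- ((g b)\<^sup>2) / s))) \<partial>(\<Pi>\<^sub>M b\<in>Basis. lborel))"
  proof (rule nn_integral_cong)
    fix g :: "'a \<Rightarrow> real"
    have "- ((norm (\<Sum>b\<in>Basis. g b *\<^sub>R b :: 'a))\<^sup>2) / s = (\<Sum>b\<in>Basis. - ((g b)\<^sup>2) / s)"
      unfolding norm_sum_Basis_power2 by (simp add: sum_divide_distrib sum_negf)
    then show "ennreal (exp (- ((norm (\<Sum>b\<in>Basis. g b *\<^sub>R b :: 'a))\<^sup>2) / s))
        = (\<Prod>b\<in>(Basis::'a set). ennreal (exp (- ((g b)\<^sup>2) / s)))"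
      by (simp add: exp_sum prod_ennreal)
  qed
  also have "\<dots> = (\<Prod>b\<in>(Basis::'a set). \<integral>\<^sup>+t. ennreal (exp (- (t\<^sup>2) / s)) \<partial>lborel)"
    by (rule product_nn_integral_prod) auto
  also have "\<dots> < \<infinity>"
    using integrable_exp_minus_power2_div[OF assms]
    by (simp add: integrable_iff_bounded power_less_top_ennreal)
  finally show ?thesis
    by (intro integrableI_bounded) simp_all
qed

lemma
  fixes g :: "'a::euclidean_space \<Rightarrow> 'b::{banach, second_countable_topology}"
  assumes c: "\<bar>c\<bar> = 1" and [measurable]: "g \<in> borel_measurable borel"
  shows integrable_lborel_unit_affine_iff:
      "integrable lborel (\<lambda>x. g (t + c *\<^sub>R x)) \<longleftrightarrow> integrable lborel g"
    and integral_lborel_unit_affine: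
      "(\<integral>x. g (t + c *\<^sub>R x) \<partial>lborel) = integral\<^sup>L lborel g"
proof -
  have "c \<noteq> 0" using c by auto
  then have distr_eq: "distr lborel borel (\<lambda>x. t + c *\<^sub>R x) = (lborel :: 'a measure)"
    using lborel_affine[of c t] c by (simp add: density_1)
  have [measurable]: "(\<lambda>x::'a. t + c *\<^sub>R x) \<in> lborel \<rightarrow>\<^sub>M borel" by measurable
  show "integrable lborel (\<lambda>x. g (t + c *\<^sub>R x)) \<longleftrightarrow> integrable lborel g"
    using integrable_distr_eq[of "\<lambda>x. t + c *\<^sub>R x" lborel borel g] distr_eq by simp
  show "(\<integral>x. g (t + c *\<^sub>R x) \<partial>lborel) = integral\<^sup>L lborel g"
    using integral_distr[of "\<lambda>x. t + c *\<^sub>R x" lborel borel g] distr_eq by simp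
qed

lemma gauss_dens_translate: "gauss_dens \<tau> x (x + z) = gauss_dens \<tau> 0 z"
  by (simp add: gauss_dens_def)

lemma gauss_dens_nonneg: "0 \<le> gauss_dens \<tau> x x'"
  by (simp add: gauss_dens_def)

lemma borel_measurable_gauss_dens[measurable]: "gauss_dens \<tau> x \<in> borel_measurable borel"
  unfolding gauss_dens_def by measurable

lemma integrable_gauss_dens:
  fixes x :: "'a::euclidean_space"
  assumes "\<tau> > 0"
  shows "integrable lebesgue (gauss_dens \<tau> x)"
proof -
  have "integrable lborel (\<lambda>z::'a. (2 * pi * \<tau>) powr (- real DIM('a) / 2) * exp (- ((norm z)\<^sup>2) / (2 * \<tau>)))"
    using assms by (intro integrable_mult_right integrable_exp_minus_norm_power2_div) simp
  then have "integrable lborel (\<lambda>z. gauss_dens \<tau> x (x + 1 *\<^sub>R z))"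
    by (simp add: gauss_dens_def)
  then have "integrable lborel (gauss_dens \<tau> x)"
    by (subst (asm) integrable_lborel_unit_affine_iff) simp_all
  then show ?thesis
    by (subst integrable_completion) simp_all
qed

lemma integral_gauss_dens:
  fixes x :: "'a::euclidean_space"
  shows "integral\<^sup>L lebesgue (gauss_dens \<tau> x) = integral\<^sup>L lborel (gauss_dens \<tau> (0::'a))"
proof -
  have "integral\<^sup>L lebesgue (gauss_dens \<tau> x) = integral\<^sup>L lborel (gauss_dens \<tau> x)"
    by (rule integral_completion) measurable
  also have "\<dots> = (\<integral>z. gauss_dens \<tau> x (x + 1 *\<^sub>R z) \<partial>lborel)"
    by (rule integral_lborel_unit_affine[symmetric]) (simp, measurable)
  also have "\<dots> = integral\<^sup>L lborel (gauss_dens \<tau> (0::'a))"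
    by (simp add: gauss_dens_translate)
  finally show ?thesis .
qed

lemma integrable_gauss_dens_first_moment:
  fixes x :: "'a::euclidean_space"
  assumes "\<tau> > 0"
  shows "integrable lebesgue (\<lambda>x'. gauss_dens \<tau> x x' *\<^sub>R (x - x'))"
proof -
  define cst where "cst = (2 * pi * \<tau>) powr (- real DIM('a) / 2)"
  have "cst > 0" using assms by (simp add: cst_def)
  let ?bound = "\<lambda>z::'a. cst * exp \<tau> * exp (- ((norm z)\<^sup>2) / (4 * \<tau>))"
  have "integrable lborel ?bound"
    using assms by (intro integrable_mult_right integrable_exp_minus_norm_power2_div) simp
  moreover have "(\<lambda>z::'a. gauss_dens \<tau> 0 z *\<^sub>R z) \<in> borel_measurable lborel"
    unfolding gauss_dens_def by measurable
  moreover have "AE z in lborel. norm (gauss_dens \<tau> 0 z *\<^sub>R z) \<le> norm (?bound z)"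
  proof (rule AE_I2)
    fix z :: 'a
    have "norm (gauss_dens \<tau> 0 z *\<^sub>R z) = cst * (norm z * exp (- ((norm z)\<^sup>2) / (2 * \<tau>)))"
      using \<open>cst > 0\<close> by (simp add: gauss_dens_def cst_def abs_mult)
    also have "\<dots> \<le> cst * (exp \<tau> * exp (- ((norm z)\<^sup>2) / (4 * \<tau>)))"
      using exp_scaled_power2_bound[OF assms] \<open>cst > 0\<close> by (intro mult_left_mono) auto
    also have "\<dots> = norm (?bound z)"
      using \<open>cst > 0\<close> by (simp add: abs_mult)
    finally show "norm (gauss_dens \<tau> 0 z *\<^sub>R z) \<le> norm (?bound z)" .
  qed
  ultimately have "integrable lborel (\<lambda>z::'a. gauss_dens \<tau> 0 z *\<^sub>R z)"
    by (rule Bochner_Integration.integrable_bound)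
  then have "integrable lborel (\<lambda>z. gauss_dens \<tau> x (x + 1 *\<^sub>R z) *\<^sub>R (x - (x + 1 *\<^sub>R z)))"
    by (simp add: gauss_dens_translate)
  then have "integrable lborel (\<lambda>x'. gauss_dens \<tau> x x' *\<^sub>R (x - x'))"
    by (subst (asm) integrable_lborel_unit_affine_iff) simp_all
  then show ?thesis
    by (subst integrable_completion) simp_all
qed

lemma integral_gauss_dens_first_moment:
  fixes x :: "'a::euclidean_space"
  shows "(\<integral>x'. gauss_dens \<tau> x x' *\<^sub>R (x - x') \<partial>lebesgue) = 0"
proof -
  let ?m = "\<lambda>x'. gauss_dens \<tau> x x' *\<^sub>R (x - x')"
  have [measurable]: "?m \<in> borel_measurable borel"
    by measurable
  \<comment> \<open>the reflection x' \<mapsto> 2 x - x' preserves the Gaussian and negates the moment\<close>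
  have "integral\<^sup>L lborel ?m = (\<integral>z. ?m (2 *\<^sub>R x + (-1) *\<^sub>R z) \<partial>lborel)"
    by (rule integral_lborel_unit_affine[symmetric]) (simp, measurable)
  also have "\<dots> = (\<integral>z. - ?m z \<partial>lborel)"
  proof (rule Bochner_Integration.integral_cong)
    fix z
    have "2 *\<^sub>R x + (-1) *\<^sub>R z - x = - (z - x)" "x - (2 *\<^sub>R x + (-1) *\<^sub>R z) = - (x - z)"
      by (simp_all add: scaleR_2)
    then show "?m (2 *\<^sub>R x + (-1) *\<^sub>R z) = - ?m z"
      by (simp only: gauss_dens_def norm_minus_cancel scaleR_minus_right)
  qed simp
  also have "\<dots> = - integral\<^sup>L lborel ?m"
    by (rule Bochner_Integration.integral_minus)
  finally have "integral\<^sup>L lborel ?m + integral\<^sup>L lborel ?m = 0"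
    by (simp only: eq_neg_iff_add_eq_0)
  then have "integral\<^sup>L lborel ?m = 0"
    by (simp flip: scaleR_2)
  then show ?thesis
    by (subst integral_completion) simp_all
qed

lemma integrable_mult_gauss_dens:
  fixes f :: "'a::euclidean_space \<Rightarrow> real"
  assumes [measurable]: "f \<in> borel_measurable lebesgue"
    and "(\<integral>\<^sup>+ x'. ennreal (\<bar>f x'\<bar> * gauss_dens \<tau> x x') \<partial>lebesgue) < \<infinity>"
  shows "integrable lebesgue (\<lambda>x'. f x' * gauss_dens \<tau> x x')"
proof (rule integrableI_bounded)
  have "gauss_dens \<tau> x \<in> borel_measurable lebesgue"
    by (rule measurable_completion) simp
  then show "(\<lambda>x'. f x' * gauss_dens \<tau> x x') \<in> borel_measurable lebesgue"
    by measurable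
  show "(\<integral>\<^sup>+ x'. ennreal (norm (f x' * gauss_dens \<tau> x x')) \<partial>lebesgue) < \<infinity>"
    using assms(2) by (simp add: abs_mult gauss_dens_nonneg)
qed

lemma Zc_pos:
  fixes f :: "'a::euclidean_space \<Rightarrow> real"
  assumes [measurable]: "f \<in> borel_measurable lebesgue"
    and lower: "\<forall>x'. c \<le> f x'" and tau: "\<tau> > 0"
  shows "Zc f \<tau> y > 0"
proof -
  define cst where "cst = (2 * pi * \<tau>) powr (- real DIM('a) / 2)"
  have "cst > 0" using tau by (simp add: cst_def)
  let ?e = "\<lambda>x'. exp (- f x' - (norm (y - x'))\<^sup>2 / (2 * \<tau>))"
  have [measurable]: "(\<lambda>x'::'a. (norm (y - x'))\<^sup>2) \<in> borel_measurable lebesgue"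
    by (rule measurable_completion) measurable
  have "integrable lebesgue (\<lambda>x'. exp (- c) / cst * gauss_dens \<tau> y x')"
    by (intro integrable_mult_right integrable_gauss_dens tau)
  moreover have "?e \<in> borel_measurable lebesgue"
    by measurable
  moreover have "AE x' in lebesgue. norm (?e x') \<le> norm (exp (- c) / cst * gauss_dens \<tau> y x')"
  proof (rule AE_I2)
    fix x' :: 'a
    have "?e x' = exp (- f x') * exp (- (norm (y - x'))\<^sup>2 / (2 * \<tau>))"
      by (simp add: exp_add[symmetric])
    also have "\<dots> \<le> exp (- c) * exp (- (norm (y - x'))\<^sup>2 / (2 * \<tau>))"
      using lower by (intro mult_right_mono) auto
    also have "\<dots> = exp (- c) / cst * gauss_dens \<tau> y x'"
      using \<open>cst > 0\<close> by (simp add: gauss_dens_def cst_def norm_minus_commute)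
    finally show "norm (?e x') \<le> norm (exp (- c) / cst * gauss_dens \<tau> y x')"
      using \<open>cst > 0\<close> by (simp add: gauss_dens_nonneg)
  qed
  ultimately have integrable: "integrable lebesgue ?e"
    by (rule Bochner_Integration.integrable_bound)
  have "Zc f \<tau> y \<noteq> 0"
  proof
    assume "Zc f \<tau> y = 0"
    then have "AE x' in lebesgue. ?e x' = 0"
      using integral_nonneg_eq_0_iff_AE[OF integrable] unfolding Zc_def by auto
    then have "AE (x'::'a) in lebesgue. False"
      by simp
    then have "ae_filter (lebesgue::'a measure) = bot"
      using trivial_limit_def by blast
    then show False
      by (simp add: ae_filter_eq_bot_iff)
  qed
  moreover have "0 \<le> Zc f \<tau> y"
    unfolding Zc_def by (rule Bochner_Integration.integral_nonneg) simp
  ultimately show ?thesis by simp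
qed

lemma norm_diff_power2_expand:
  fixes x y x' :: "'a::real_inner"
  shows "(norm (y - x'))\<^sup>2 = (norm (y - x))\<^sup>2 + 2 * ((y - x) \<bullet> (x - x')) + (norm (x' - x))\<^sup>2"
proof -
  have "y - x' = (y - x) + (x - x')" by simp
  then have "(norm (y - x'))\<^sup>2 = ((y - x) + (x - x')) \<bullet> ((y - x) + (x - x'))"
    by (simp add: power2_norm_eq_inner)
  also have "\<dots> = (y - x) \<bullet> (y - x) + 2 * ((y - x) \<bullet> (x - x')) + (x - x') \<bullet> (x - x')"
    unfolding inner_add_left inner_add_right inner_commute[of "x - x'" "y - x"] by linarith
  also have "\<dots> = (norm (y - x))\<^sup>2 + 2 * ((y - x) \<bullet> (x - x')) + (norm (x' - x))\<^sup>2"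
    by (simp add: power2_norm_eq_inner norm_minus_commute[of x' x])
  finally show ?thesis .
qed

lemma ln_gauss_dens_div_q_dens:
  fixes f :: "'a::euclidean_space \<Rightarrow> real"
  assumes tau: "\<tau> > 0" and Z: "Zc f \<tau> y > 0"
  shows "ln (gauss_dens \<tau> x x' / q_dens f \<tau> y x') =
     ln ((2 * pi * \<tau>) powr (- real DIM('a) / 2)) + ln (Zc f \<tau> y) + (norm (y - x))\<^sup>2 / (2 * \<tau>)
     + f x' + (y - x) \<bullet> (x - x') / \<tau>"
proof -
  define cst where "cst = (2 * pi * \<tau>) powr (- real DIM('a) / 2)"
  have "cst > 0" using tau by (simp add: cst_def)
  have "ln (gauss_dens \<tau> x x' / q_dens f \<tau> y x') =
      ln cst - (norm (x' - x))\<^sup>2 / (2 * \<tau>) + f x' + (norm (y - x'))\<^sup>2 / (2 * \<tau>) + ln (Zc f \<tau> y)"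
    using \<open>cst > 0\<close> Z by (simp add: gauss_dens_def q_dens_def cst_def ln_mult ln_div)
  also have "\<dots> = ln cst + ln (Zc f \<tau> y) + (norm (y - x))\<^sup>2 / (2 * \<tau>) + f x' + (y - x) \<bullet> (x - x') / \<tau>"
    unfolding norm_diff_power2_expand[of y x' x] using tau by (simp add: field_simps)
  finally show ?thesis by (simp add: cst_def)
qed

lemma KL_div_gauss_dens_q_dens:
  fixes f :: "'a::euclidean_space \<Rightarrow> real"
  assumes f_meas: "f \<in> borel_measurable lebesgue"
    and lower: "\<forall>x'. c \<le> f x'"
    and f_int: "(\<integral>\<^sup>+ x'. ennreal (\<bar>f x'\<bar> * gauss_dens \<tau> x x') \<partial>lebesgue) < \<infinity>"
    and tau: "\<tau> > 0"
  shows "KL_div (gauss_dens \<tau> x) (q_dens f \<tau> y) =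
     (ln ((2 * pi * \<tau>) powr (- real DIM('a) / 2)) + ln (Zc f \<tau> y) + (norm (y - x))\<^sup>2 / (2 * \<tau>))
       * integral\<^sup>L lborel (gauss_dens \<tau> (0::'a)) + heat_reg f \<tau> x"
proof -
  define C where "C = ln ((2 * pi * \<tau>) powr (- real DIM('a) / 2)) + ln (Zc f \<tau> y) + (norm (y - x))\<^sup>2 / (2 * \<tau>)"
  let ?lin = "\<lambda>x'. (y - x) \<bullet> (gauss_dens \<tau> x x' *\<^sub>R (x - x')) / \<tau>"
  have integrable_const: "integrable lebesgue (\<lambda>x'. C * gauss_dens \<tau> x x')"
    by (intro integrable_mult_right integrable_gauss_dens tau)
  have integrable_f: "integrable lebesgue (\<lambda>x'. f x' * gauss_dens \<tau> x x')"
    by (rule integrable_mult_gauss_dens[OF f_meas f_int])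
  have integrable_lin: "integrable lebesgue ?lin"
    by (intro Bochner_Integration.integrable_divide integrable_inner_right
        integrable_gauss_dens_first_moment tau)
  have integral_lin: "integral\<^sup>L lebesgue ?lin = 0"
  proof -
    have "(\<integral>x'. (y - x) \<bullet> (gauss_dens \<tau> x x' *\<^sub>R (x - x')) \<partial>lebesgue)
        = (y - x) \<bullet> (\<integral>x'. gauss_dens \<tau> x x' *\<^sub>R (x - x') \<partial>lebesgue)"
      by (rule integral_inner_right) (rule integrable_gauss_dens_first_moment[OF tau])
    then show ?thesis
      by (simp only: integral_divide_zero integral_gauss_dens_first_moment inner_zero_right div_0)
  qed
  have pointwise: "ln (gauss_dens \<tau> x x' / q_dens f \<tau> y x') * gauss_dens \<tau> x x' =
      C * gauss_dens \<tau> x x' + f x' * gauss_dens \<tau> x x' + ?lin x'" for x'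
  proof -
    have "ln (gauss_dens \<tau> x x' / q_dens f \<tau> y x') = C + f x' + (y - x) \<bullet> (x - x') / \<tau>"
      unfolding ln_gauss_dens_div_q_dens[OF tau Zc_pos[OF f_meas lower tau]] C_def ..
    then show ?thesis
      by (simp add: algebra_simps)
  qed
  have "KL_div (gauss_dens \<tau> x) (q_dens f \<tau> y)
      = (\<integral>x'. C * gauss_dens \<tau> x x' + f x' * gauss_dens \<tau> x x' + ?lin x' \<partial>lebesgue)"
    unfolding KL_div_def pointwise ..
  also have "\<dots> = (\<integral>x'. C * gauss_dens \<tau> x x' \<partial>lebesgue) + heat_reg f \<tau> x"
    unfolding heat_reg_def
    using integrable_const integrable_f integrable_lin integral_lin by simp
  also have "(\<integral>x'. C * gauss_dens \<tau> x x' \<partial>lebesgue) = C * integral\<^sup>L lborel (gauss_dens \<tau> (0::'a))"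
    by (simp add: integral_gauss_dens)
  finally show ?thesis
    unfolding C_def .
qed

lemma heat_reg_le_of_KL_div_le:
  fixes f :: "'a::euclidean_space \<Rightarrow> real"
  assumes f_meas: "f \<in> borel_measurable lebesgue"
    and lower: "\<forall>x'. c \<le> f x'"
    and f_int: "\<forall>x. (\<integral>\<^sup>+ x'. ennreal (\<bar>f x'\<bar> * gauss_dens \<tau> x x') \<partial>lebesgue) < \<infinity>"
    and tau: "\<tau> > 0"
    and KL_le: "KL_div (gauss_dens \<tau> x) (q_dens f \<tau> y) \<le> KL_div (gauss_dens \<tau> y) (q_dens f \<tau> y)"
  shows "heat_reg f \<tau> x \<le> heat_reg f \<tau> y"
proof -
  define C where "C = ln ((2 * pi * \<tau>) powr (- real DIM('a) / 2)) + ln (Zc f \<tau> y)"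
  \<comment> \<open>the total mass M equals 1, but only M \<ge> 0 is used\<close>
  define M where "M = integral\<^sup>L lborel (gauss_dens \<tau> (0::'a))"
  have "(C + (norm (y - x))\<^sup>2 / (2 * \<tau>)) * M + heat_reg f \<tau> x \<le> C * M + heat_reg f \<tau> y"
    using KL_le unfolding KL_div_gauss_dens_q_dens[OF f_meas lower f_int[rule_format] tau] C_def M_def
    by simp
  moreover have "0 \<le> (norm (y - x))\<^sup>2 / (2 * \<tau>) * M"
    using tau unfolding M_def by (simp add: gauss_dens_nonneg)
  ultimately show ?thesis
    by (simp add: distrib_right)
qed

theorem theorem4:
  fixes f :: "'a::euclidean_space \<Rightarrow> real"
    and \<tau> :: real and xs :: "nat \<Rightarrow> 'a" and K :: nat
  assumes f_meas: "f \<in> borel_measurable lebesgue"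
    and f_bdd_below: "\<exists>c. \<forall>y. c \<le> f y"
    and f_int: "\<forall>x. (\<integral>\<^sup>+ x'. ennreal (\<bar>f x'\<bar> * gauss_dens \<tau> x x') \<partial>lebesgue) < \<infinity>"
    and tau_pos: "\<tau> > 0"
    and minimizer: "\<forall>k<K. \<forall>y. KL_div (gauss_dens \<tau> (xs (Suc k))) (q_dens f \<tau> (xs k))
                                 \<le> KL_div (gauss_dens \<tau> y) (q_dens f \<tau> (xs k))"
  shows "\<forall>k. 1 \<le> k \<and> k \<le> K \<longrightarrow> heat_reg f \<tau> (xs k) \<le> heat_reg f \<tau> (xs (k - 1))"
proof (intro allI impI)
  fix k assume k: "1 \<le> k \<and> k \<le> K"
  then obtain j where j: "k = Suc j" "j < K"
    by (cases k) auto
  obtain c where "\<forall>y. c \<le> f y"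
    using f_bdd_below by blast
  moreover have "KL_div (gauss_dens \<tau> (xs (Suc j))) (q_dens f \<tau> (xs j))
      \<le> KL_div (gauss_dens \<tau> (xs j)) (q_dens f \<tau> (xs j))"
    using minimizer j by blast
  ultimately show "heat_reg f \<tau> (xs k) \<le> heat_reg f \<tau> (xs (k - 1))"
    using heat_reg_le_of_KL_div_le[OF f_meas _ f_int tau_pos] j by simp
qed

end
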